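(* Let $C$ be a cycle and $\mathcal H$ a family of vertex subsets of $C$ such that $(C,\mathcal H)$ is $axax$-free. Then there is an outerplanar graph $Q^*$ with vertex set $\mathcal H$ such that for every vertex $v$ of $C$ the set $\{H\in\mathcal H: v\in H\}$ induces a connected subgraph of $Q^*$.
   Context: Let $C$ be a cycle with a fixed cyclic orientation; "vertices $p_1,\dots,p_4$ in cyclic order" means four distinct vertices met in this order when traversing $C$. A pair $H,H'\in\mathcal H$ is an $axax$-pair if there are vertices $a_1,x_1,a_2,x_2$ in cyclic order with $a_1,a_2\in H\setminus H'$ and $x_1,x_2\in H'$; $(C,\mathcal H)$ is $axax$-free if it has no $axax$-pair. A graph is outerplanar if it has a plane embedding with all vertices on the outer face. *)

theory Defs
  imports "HOL-Analysis.Analysis"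
begin

text \<open>The cycle C has vertex set {0..<n} (n >= 3), with the cyclic orientation
  0 -> 1 -> ... -> n-1 -> 0.  Four vertices are in cyclic order iff some cyclic
  rotation of them is strictly increasing.\<close>

definition cyclic_order4 :: "nat \<Rightarrow> nat \<Rightarrow> nat \<Rightarrow> nat \<Rightarrow> bool" where
  "cyclic_order4 p1 p2 p3 p4 \<longleftrightarrow>
     (p1 < p2 \<and> p2 < p3 \<and> p3 < p4) \<or> (p2 < p3 \<and> p3 < p4 \<and> p4 < p1) \<or>
     (p3 < p4 \<and> p4 < p1 \<and> p1 < p2) \<or> (p4 < p1 \<and> p1 < p2 \<and> p2 < p3)"

definition axax_pair :: "nat set set \<Rightarrow> nat set \<Rightarrow> nat set \<Rightarrow> bool" where
  "axax_pair \<H> H H' \<longleftrightarrow> H \<in> \<H> \<and> H' \<in> \<H> \<and>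
     (\<exists>a1 x1 a2 x2. cyclic_order4 a1 x1 a2 x2 \<and> a1 \<in> H - H' \<and> a2 \<in> H - H'
        \<and> x1 \<in> H' \<and> x2 \<in> H')"

definition axax_free :: "nat set set \<Rightarrow> bool" where
  "axax_free \<H> \<longleftrightarrow> \<not> (\<exists>H H'. axax_pair \<H> H H')"

definition simple_graph :: "'v set \<Rightarrow> 'v set set \<Rightarrow> bool" where
  "simple_graph V E \<longleftrightarrow> finite V \<and> E \<subseteq> {{u, v} | u v. u \<in> V \<and> v \<in> V \<and> u \<noteq> v}"

text \<open>Outerplanar: there is a plane embedding (vertices as distinct points of the
  plane, edges as arcs joining their endpoints, arcs avoid vertex points in their
  interior and pairwise meet only in vertex points) such that every vertex lies on
  the boundary of the outer (unbounded) face.\<close>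

definition outerplanar :: "'v set \<Rightarrow> 'v set set \<Rightarrow> bool" where
  "outerplanar V E \<longleftrightarrow> simple_graph V E \<and>
    (\<exists>(pos :: 'v \<Rightarrow> complex) (\<gamma> :: 'v set \<Rightarrow> real \<Rightarrow> complex).
       inj_on pos V \<and>
       (\<forall>e\<in>E. arc (\<gamma> e) \<and>
          (\<exists>u v. e = {u, v} \<and> pathstart (\<gamma> e) = pos u \<and> pathfinish (\<gamma> e) = pos v)) \<and>
       (\<forall>e\<in>E. \<forall>t\<in>{0<..<1}. \<gamma> e t \<notin> pos ` V) \<and>
       (\<forall>e\<in>E. \<forall>e'\<in>E. e \<noteq> e' \<longrightarrow> path_image (\<gamma> e) \<inter> path_image (\<gamma> e') \<subseteq> pos ` V) \<and>
       (\<forall>v\<in>V. pos v \<in> frontier (outside (pos ` V \<union> (\<Union>e\<in>E. path_image (\<gamma> e))))))"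

definition induces_connected :: "'v set set \<Rightarrow> 'v set \<Rightarrow> bool" where
  "induces_connected E S \<longleftrightarrow>
     (\<forall>x\<in>S. \<forall>y\<in>S. (\<lambda>a b. a \<in> S \<and> b \<in> S \<and> {a, b} \<in> E)\<^sup>*\<^sup>* x y)"

end

theory Submission
  imports Defs
begin

(* If a member H0 lies inside another member H1, the family
   without H0 is handled by induction and H0 is attached to H1 by a single edge. If no member
   contains another but some member H separates two points of the cycle covered by the family
   and lying outside H, then by axax-freeness the points outside H of any other member all lie on
   one side of H; the family splits into two smaller ones sharing only H, and their graphs are
   glued at H. Otherwise every member is an arc of the covered points, and the cycle through the
   members in the order of their starting points works. All graphs built are drawn with their
   vertices on a circle and pairwise non-crossing chords; placing the vertices on the real line
   and the edges on parabolic arches above it shows that they are outerplanar. *)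

section \<open>Forward distance on the cycle\<close>

definition forward_dist :: "nat \<Rightarrow> nat \<Rightarrow> nat \<Rightarrow> nat" where
  "forward_dist n a x = (if a \<le> x then x - a else x + n - a)"

lemma forward_dist_less: "a < n \<Longrightarrow> x < n \<Longrightarrow> forward_dist n a x < n"
  by (auto simp: forward_dist_def)

lemma forward_dist_self [simp]: "forward_dist n a a = 0"
  by (simp add: forward_dist_def)

lemma forward_dist_eq_0_iff: "a < n \<Longrightarrow> x < n \<Longrightarrow> forward_dist n a x = 0 \<longleftrightarrow> x = a"
  by (auto simp: forward_dist_def)

lemma forward_dist_inject:
  "a < n \<Longrightarrow> x < n \<Longrightarrow> y < n \<Longrightarrow> forward_dist n a x = forward_dist n a y \<longleftrightarrow> x = y"
  by (auto simp: forward_dist_def split: if_splits)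

lemma forward_dist_add_eq_iff_left:
  "a < n \<Longrightarrow> b < n \<Longrightarrow> c < n \<Longrightarrow>
   forward_dist n a b + forward_dist n b c = forward_dist n a c \<longleftrightarrow> forward_dist n a b \<le> forward_dist n a c"
  by (auto simp: forward_dist_def)

lemma forward_dist_add_eq_iff_right:
  "a < n \<Longrightarrow> b < n \<Longrightarrow> c < n \<Longrightarrow>
   forward_dist n a b + forward_dist n b c = forward_dist n a c \<longleftrightarrow> forward_dist n b c \<le> forward_dist n a c"
  by (auto simp: forward_dist_def)

lemma forward_dist_add_eq_if_less:
  "a < n \<Longrightarrow> b < n \<Longrightarrow> c < n \<Longrightarrow> forward_dist n a b + forward_dist n b c < n \<Longrightarrow>
   forward_dist n a b + forward_dist n b c = forward_dist n a c"
  by (auto simp: forward_dist_def)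

lemma forward_dist_rotate:
  "t < n \<Longrightarrow> a < n \<Longrightarrow> b < n \<Longrightarrow>
   forward_dist n (forward_dist n t a) (forward_dist n t b) = forward_dist n a b"
  by (auto simp: forward_dist_def)

lemma cyclic_order4_iff_forward_dist:
  assumes "a < n" "b < n" "c < n" "d < n"
  shows "cyclic_order4 a b c d \<longleftrightarrow>
    0 < forward_dist n a b \<and> forward_dist n a b < forward_dist n a c \<and>
    forward_dist n a c < forward_dist n a d"
  using assms by (auto simp: cyclic_order4_def forward_dist_def)

lemma cyclic_order4_rotate: "cyclic_order4 a b c d \<Longrightarrow> cyclic_order4 b c d a"
  unfolding cyclic_order4_def by blast

lemma cyclic_order4_shift_iff:
  assumes "t < n" "a < n" "b < n" "c < n" "d < n"
  shows "cyclic_order4 (forward_dist n t a) (forward_dist n t b) (forward_dist n t c) (forward_dist n t d)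
    \<longleftrightarrow> cyclic_order4 a b c d"
  using assms
  by (simp add: cyclic_order4_iff_forward_dist[of _ n] forward_dist_less forward_dist_rotate)

lemma cyclic_order4_strict_mono_iff:
  "strict_mono \<phi> \<Longrightarrow> cyclic_order4 (\<phi> a) (\<phi> b) (\<phi> c) (\<phi> d) \<longleftrightarrow> cyclic_order4 a b c d"
  by (simp add: cyclic_order4_def strict_mono_less)

lemma cyclic_order4_split:
  "cyclic_order4 p h r h' \<Longrightarrow> q \<notin> {p, h, r, h'} \<Longrightarrow>
   cyclic_order4 p h q h' \<or> cyclic_order4 q h r h'"
  unfolding cyclic_order4_def by auto


section \<open>Non-crossing chord drawings\<close>

lemma simple_graph_Un: "simple_graph V1 E1 \<Longrightarrow> simple_graph V2 E2 \<Longrightarrow> simple_graph (V1 \<union> V2) (E1 \<union> E2)"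
  unfolding simple_graph_def by blast

text \<open>A one-page book embedding: the vertices sit on a circle in the cyclic order of their
  positions given by f, and the edges are chords, no two of which cross.\<close>

definition noncrossing_chords :: "'v set \<Rightarrow> 'v set set \<Rightarrow> ('v \<Rightarrow> nat) \<Rightarrow> bool" where
  "noncrossing_chords V E f \<longleftrightarrow> simple_graph V E \<and> inj_on f V \<and>
     (\<forall>a b c d. {a, b} \<in> E \<longrightarrow> {c, d} \<in> E \<longrightarrow> \<not> cyclic_order4 (f a) (f c) (f b) (f d))"

lemma noncrossing_chords_edgeD:
  assumes "noncrossing_chords V E f" "{a, b} \<in> E"
  shows "a \<in> V" "b \<in> V"
  using assms unfolding noncrossing_chords_def simple_graph_def by (auto simp: doubleton_eq_iff)

lemma noncrossing_chordsD:
  "noncrossing_chords V E f \<Longrightarrow> {a, b} \<in> E \<Longrightarrow> {c, d} \<in> E \<Longrightarrow> \<not> cyclic_order4 (f a) (f c) (f b) (f d)"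
  unfolding noncrossing_chords_def by blast

lemma noncrossing_chords_empty: "finite V \<Longrightarrow> \<exists>f. noncrossing_chords V {} f"
  using finite_imp_inj_to_nat_seg by (fastforce simp: noncrossing_chords_def simple_graph_def)

lemma noncrossing_chords_single_edge:
  assumes "x \<noteq> y"
  shows "noncrossing_chords {x, y} {{x, y}} (\<lambda>z. if z = x then 0 else 1)"
  using assms by (auto simp: noncrossing_chords_def simple_graph_def inj_on_def doubleton_eq_iff
      cyclic_order4_def)

lemma noncrossing_chords_relabel:
  assumes chords: "noncrossing_chords V E f" and "strict_mono \<phi>" and g: "\<And>v. v \<in> V \<Longrightarrow> g v = \<phi> (f v)"
  shows "noncrossing_chords V E g"
proof -
  have "inj_on g V"
    using chords \<open>strict_mono \<phi>\<close> g by (auto simp: noncrossing_chords_def inj_on_def strict_mono_eq)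
  moreover have "\<not> cyclic_order4 (g a) (g c) (g b) (g d)" if "{a, b} \<in> E" "{c, d} \<in> E" for a b c d
    using noncrossing_chordsD[OF chords that] noncrossing_chords_edgeD[OF chords that(1)]
      noncrossing_chords_edgeD[OF chords that(2)] g cyclic_order4_strict_mono_iff[OF \<open>strict_mono \<phi>\<close>]
    by simp
  ultimately show ?thesis using chords by (simp add: noncrossing_chords_def)
qed

lemma noncrossing_chords_rotate:
  assumes chords: "noncrossing_chords V E f" and less_M: "\<And>v. v \<in> V \<Longrightarrow> f v < M" and "t < M"
  shows "noncrossing_chords V E (\<lambda>v. forward_dist M t (f v))"
proof -
  have "inj_on (\<lambda>v. forward_dist M t (f v)) V"
    using chords less_M \<open>t < M\<close> by (auto simp: noncrossing_chords_def inj_on_def forward_dist_inject)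
  moreover have "\<not> cyclic_order4 (forward_dist M t (f a)) (forward_dist M t (f c))
      (forward_dist M t (f b)) (forward_dist M t (f d))"
    if "{a, b} \<in> E" "{c, d} \<in> E" for a b c d
    using noncrossing_chordsD[OF chords that] noncrossing_chords_edgeD[OF chords that(1)]
      noncrossing_chords_edgeD[OF chords that(2)] less_M \<open>t < M\<close>
    by (simp add: cyclic_order4_shift_iff)
  ultimately show ?thesis using chords by (simp add: noncrossing_chords_def)
qed

lemma noncrossing_chords_rotate_to_zero:
  assumes chords: "noncrossing_chords V E f" and "h \<in> V"
  obtains g M where "noncrossing_chords V E g" "g h = 0" "\<And>v. v \<in> V \<Longrightarrow> g v < M"
proof -
  define M where "M = Suc (Max (f ` V))"
  have less_M: "f v < M" if "v \<in> V" for v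
    using chords that by (simp add: M_def le_imp_less_Suc noncrossing_chords_def simple_graph_def)
  have "noncrossing_chords V E (\<lambda>v. forward_dist M (f h) (f v))"
    by (rule noncrossing_chords_rotate[OF chords less_M less_M[OF \<open>h \<in> V\<close>]])
  moreover have "forward_dist M (f h) (f h) = 0" by simp
  moreover have "forward_dist M (f h) (f v) < M" if "v \<in> V" for v
    using forward_dist_less less_M that \<open>h \<in> V\<close> by blast
  ultimately show thesis by (rule that)
qed

lemma noncrossing_chords_Un:
  assumes chords1: "noncrossing_chords V1 E1 f" and chords2: "noncrossing_chords V2 E2 f"
    and "inj_on f (V1 \<union> V2)"
    and across: "\<And>a b c d. {a, b} \<in> E1 \<Longrightarrow> {c, d} \<in> E2 \<Longrightarrow> \<not> cyclic_order4 (f a) (f c) (f b) (f d)"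
  shows "noncrossing_chords (V1 \<union> V2) (E1 \<union> E2) f"
proof -
  have "\<not> cyclic_order4 (f a) (f c) (f b) (f d)"
    if ab: "{a, b} \<in> E1 \<union> E2" and cd: "{c, d} \<in> E1 \<union> E2" for a b c d
  proof
    assume cross: "cyclic_order4 (f a) (f c) (f b) (f d)"
    consider "{a, b} \<in> E1" "{c, d} \<in> E1" | "{a, b} \<in> E2" "{c, d} \<in> E2"
      | "{a, b} \<in> E1" "{c, d} \<in> E2" | "{c, d} \<in> E1" "{a, b} \<in> E2"
      using ab cd by blast
    then show False
    proof cases
      case 1
      then show False using noncrossing_chordsD[OF chords1] cross by blast
    next
      case 2
      then show False using noncrossing_chordsD[OF chords2] cross by blast
    next
      case 3
      then show False using across cross by blast
    next
      case 4
      then show False using across[of c d b a] cyclic_order4_rotate[OF cross] by (simp add: insert_commute)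
    qed
  qed
  moreover have "simple_graph (V1 \<union> V2) (E1 \<union> E2)"
    using chords1 chords2 by (simp add: noncrossing_chords_def simple_graph_Un)
  ultimately show ?thesis using assms(3) by (simp add: noncrossing_chords_def)
qed

lemma noncrossing_chords_glue:
  assumes chords1: "noncrossing_chords V1 E1 f1" and chords2: "noncrossing_chords V2 E2 f2"
    and common: "V1 \<inter> V2 = {h}"
  shows "\<exists>f. noncrossing_chords (V1 \<union> V2) (E1 \<union> E2) f"
proof -
  have "h \<in> V1" "h \<in> V2" using common by auto
  obtain g1 M where g1: "noncrossing_chords V1 E1 g1" "g1 h = 0" and less_M: "\<And>v. v \<in> V1 \<Longrightarrow> g1 v < M"
    using noncrossing_chords_rotate_to_zero[OF chords1 \<open>h \<in> V1\<close>] by blast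
  obtain g2 where g2: "noncrossing_chords V2 E2 g2" "g2 h = 0"
    using noncrossing_chords_rotate_to_zero[OF chords2 \<open>h \<in> V2\<close>] by blast
  define \<phi> where "\<phi> k = (if k = 0 then 0 else M + k)" for k
  define f where "f v = (if v \<in> V1 then g1 v else \<phi> (g2 v))" for v
  have "strict_mono \<phi>" by (auto simp: strict_mono_def \<phi>_def)
  have f2: "f v = \<phi> (g2 v)" if "v \<in> V2" for v
  proof (cases "v \<in> V1")
    case True
    then have "v = h" using that common by blast
    then show ?thesis using g1(2) g2(2) by (simp add: f_def \<phi>_def)
  qed (simp add: f_def)
  have chords1': "noncrossing_chords V1 E1 f"
    by (rule noncrossing_chords_relabel[OF g1(1) strict_mono_id]) (simp add: f_def)
  have chords2': "noncrossing_chords V2 E2 f"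
    by (rule noncrossing_chords_relabel[OF g2(1) \<open>strict_mono \<phi>\<close> f2])
  have low: "f v < M" if "v \<in> V1" for v using less_M that by (simp add: f_def)
  have high: "M < f v" if "v \<in> V2" "v \<noteq> h" for v
  proof -
    have "g2 v \<noteq> g2 h"
      using g2(1) that \<open>h \<in> V2\<close> by (auto simp: noncrossing_chords_def dest: inj_onD)
    then show ?thesis using f2[OF that(1)] g2(2) by (simp add: \<phi>_def)
  qed
  have "f ` (V1 - V2) \<inter> f ` (V2 - V1) = {}"
    using low high common by fastforce
  then have "inj_on f (V1 \<union> V2)"
    using chords1' chords2' by (simp add: inj_on_Un noncrossing_chords_def)
  moreover have "\<not> cyclic_order4 (f a) (f c) (f b) (f d)" if "{a, b} \<in> E1" "{c, d} \<in> E2" for a b c d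
  proof -
    have "f h = 0" using g1(2) \<open>h \<in> V1\<close> by (simp add: f_def)
    then have "f v = 0 \<or> M < f v" if "v \<in> V2" for v using high[OF that] by (cases "v = h") auto
    then have "f c = 0 \<or> M < f c" "f d = 0 \<or> M < f d"
      using noncrossing_chords_edgeD[OF g2(1) \<open>{c, d} \<in> E2\<close>] by auto
    moreover have "f a < M" "f b < M"
      using low noncrossing_chords_edgeD[OF g1(1) \<open>{a, b} \<in> E1\<close>] by auto
    ultimately show ?thesis by (auto simp: cyclic_order4_def)
  qed
  ultimately have "noncrossing_chords (V1 \<union> V2) (E1 \<union> E2) f"
    by (rule noncrossing_chords_Un[OF chords1' chords2'])
  then show ?thesis by blast
qed

definition arch :: "real \<Rightarrow> real \<Rightarrow> real \<Rightarrow> complex" where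
  "arch a b t = Complex (a + (b - a) * t) ((b - a)\<^sup>2 * t * (1 - t))"

lemma Im_arch: "Im (arch a b t) = (Re (arch a b t) - a) * (b - Re (arch a b t))"
  by (simp add: arch_def power2_eq_square algebra_simps)

lemma pathstart_arch [simp]: "pathstart (arch a b) = Complex a 0"
  by (simp add: pathstart_def arch_def)

lemma pathfinish_arch [simp]: "pathfinish (arch a b) = Complex b 0"
  by (simp add: pathfinish_def arch_def)

lemma arc_arch:
  assumes "a < b"
  shows "arc (arch a b)"
proof -
  have "arch a b = (\<lambda>t. of_real (a + (b - a) * t) + \<i> * of_real ((b - a)\<^sup>2 * t * (1 - t)))"
    by (auto simp: arch_def Complex_eq)
  then have "continuous_on {0..1} (arch a b)"
    by (auto intro!: continuous_intros)
  moreover have "inj_on (arch a b) {0..1}"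
    using assms by (auto simp: inj_on_def arch_def)
  ultimately show ?thesis by (simp add: arc_def path_def)
qed

lemma Re_arch_bounds:
  assumes "a < b" "t \<in> {0..1}"
  shows "a \<le> Re (arch a b t)" "Re (arch a b t) \<le> b"
proof -
  have "0 \<le> (b - a) * t" "(b - a) * t \<le> b - a"
    using assms by (auto simp: mult_left_le)
  then show "a \<le> Re (arch a b t)" "Re (arch a b t) \<le> b" by (auto simp: arch_def)
qed

lemma Im_arch_nonneg: "a < b \<Longrightarrow> z \<in> path_image (arch a b) \<Longrightarrow> 0 \<le> Im z"
  using Re_arch_bounds by (auto simp: path_image_def Im_arch[of a b])

lemma Im_arch_pos: "a < b \<Longrightarrow> t \<in> {0<..<1} \<Longrightarrow> 0 < Im (arch a b t)"
  by (simp add: arch_def)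

lemma arch_on_axis:
  assumes "z \<in> path_image (arch a b)" "Im z = 0"
  shows "z = Complex a 0 \<or> z = Complex b 0"
proof -
  obtain t where "z = arch a b t" using assms(1) by (auto simp: path_image_def)
  then have "Re z = a \<or> Re z = b" using assms(2) Im_arch[of a b t] by auto
  then show ?thesis using assms(2) complex_eq_iff by auto
qed

lemma arches_meet_on_axis:
  assumes "a < b" "a' < b'" "(a, b) \<noteq> (a', b')"
    and "\<not> (a < a' \<and> a' < b \<and> b < b')" "\<not> (a' < a \<and> a < b' \<and> b' < b)"
    and z: "z \<in> path_image (arch a b)" "z \<in> path_image (arch a' b')"
  shows "Im z = 0"
proof (rule ccontr)
  assume "Im z \<noteq> 0"
  obtain t t' where t: "t \<in> {0..1}" "z = arch a b t" and t': "t' \<in> {0..1}" "z = arch a' b' t'"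
    using z by (auto simp: path_image_def)
  define x where "x = Re z"
  have heights: "Im z = (x - a) * (b - x)" "Im z = (x - a') * (b' - x)"
    using t t' Im_arch unfolding x_def by metis+
  have "a \<le> x" "x \<le> b" using Re_arch_bounds[OF assms(1) t(1)] t(2) by (auto simp: x_def)
  moreover have "a' \<le> x" "x \<le> b'" using Re_arch_bounds[OF assms(2) t'(1)] t'(2) by (auto simp: x_def)
  ultimately have inside: "a < x" "x < b" "a' < x" "x < b'"
    using heights \<open>Im z \<noteq> 0\<close> by (auto simp: order.order_iff_strict)
  have lower: "(x - c) * (d - x) < (x - c') * (d' - x)"
    if "c' \<le> c" "d \<le> d'" "(c, d) \<noteq> (c', d')" "c < x" "x < d" for c d c' d' :: real
  proof (cases "c' < c")
    case True
    have "(x - c) * (d - x) < (x - c') * (d - x)" using True that by (simp add: mult_strict_right_mono)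
    also have "\<dots> \<le> (x - c') * (d' - x)" using True that by (simp add: mult_left_mono)
    finally show ?thesis .
  next
    case False
    then have "c' = c" "d < d'" using that by auto
    then show ?thesis using that by (simp add: mult_strict_left_mono)
  qed
  have "(a' \<le> a \<and> b \<le> b') \<or> (a \<le> a' \<and> b' \<le> b)"
    using assms(4,5) inside by linarith
  then show False
    using lower[of a' a b b'] lower[of a a' b' b] heights inside assms(3) by auto
qed

lemma lower_halfplane_subset_outside:
  assumes "\<And>z. z \<in> S \<Longrightarrow> 0 \<le> Im z"
  shows "{z. Im z < 0} \<subseteq> outside S"
proof
  fix x :: complex assume x: "x \<in> {z. Im z < 0}"
  have "{z. Im z < 0} \<subseteq> - S" using assms by force
  then have "{z. Im z < 0} \<subseteq> connected_component_set (- S) x"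
    using x by (intro connected_component_maximal) auto
  moreover have "\<not> bounded {z. Im z < 0}"
  proof
    assume "bounded {z. Im z < 0}"
    then obtain M where M: "\<And>z. Im z < 0 \<Longrightarrow> norm z \<le> M" by (auto simp: bounded_iff)
    have "norm (Complex 0 (- \<bar>M\<bar> - 1)) \<le> M" by (rule M) simp
    moreover have "norm (Complex 0 (- \<bar>M\<bar> - 1)) = \<bar>M\<bar> + 1" by (simp add: cmod_eq_Im)
    ultimately show False by linarith
  qed
  ultimately show "x \<in> outside S" by (auto simp: outside dest: bounded_subset)
qed

lemma axis_point_in_frontier_outside:
  assumes "\<And>z. z \<in> S \<Longrightarrow> 0 \<le> Im z" "z \<in> S" "Im z = 0"
  shows "z \<in> frontier (outside S)"
proof -
  have "z \<notin> interior (outside S)"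
    using assms(2) interior_subset outside_no_overlap by blast
  moreover have "z \<in> closure {w. Im w < 0}"
    unfolding closure_approachable
  proof (intro allI impI)
    fix \<epsilon> :: real assume "\<epsilon> > 0"
    then show "\<exists>w\<in>{w. Im w < 0}. dist w z < \<epsilon>"
      using assms(3) by (intro bexI[of _ "z - Complex 0 (\<epsilon> / 2)"]) (auto simp: dist_norm norm_complex_def)
  qed
  then have "z \<in> closure (outside S)"
    using closure_mono[OF lower_halfplane_subset_outside[OF assms(1)]] by blast
  ultimately show ?thesis by (simp add: frontier_def)
qed

lemma noncrossing_chords_edge_ordered:
  assumes chords: "noncrossing_chords V E f" and "e \<in> E"
  obtains u v where "e = {u, v}" "f u < f v"
proof -
  obtain u v where uv: "e = {u, v}" "u \<in> V" "v \<in> V" "u \<noteq> v"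
    using assms unfolding noncrossing_chords_def simple_graph_def by blast
  then have "f u \<noteq> f v" using chords by (auto simp: noncrossing_chords_def dest: inj_onD)
  then consider "f u < f v" | "f v < f u" by linarith
  then show thesis
  proof cases
    case 1
    then show thesis using that uv(1) by blast
  next
    case 2
    then show thesis using that[of v u] uv(1) by (simp add: insert_commute)
  qed
qed

lemma noncrossing_arches_meet_on_axis:
  assumes chords: "noncrossing_chords V E f" and uv: "{u, v} \<in> E" "{u', v'} \<in> E" "{u, v} \<noteq> {u', v'}"
    and "f u < f v" "f u' < f v'"
    and z: "z \<in> path_image (arch (f u) (f v))" "z \<in> path_image (arch (f u') (f v'))"
  shows "Im z = 0"
proof (rule arches_meet_on_axis[OF _ _ _ _ _ z])
  show "real (f u) < real (f v)" "real (f u') < real (f v')" using assms by simp_all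
  have "u \<in> V" "v \<in> V" "u' \<in> V" "v' \<in> V"
    using noncrossing_chords_edgeD[OF chords uv(1)] noncrossing_chords_edgeD[OF chords uv(2)] by auto
  then show "(real (f u), real (f v)) \<noteq> (real (f u'), real (f v'))"
    using chords uv(3) by (auto simp: noncrossing_chords_def dest: inj_onD)
  show "\<not> (real (f u) < real (f u') \<and> real (f u') < real (f v) \<and> real (f v) < real (f v'))"
    using noncrossing_chordsD[OF chords uv(1,2)] by (auto simp: cyclic_order4_def)
  show "\<not> (real (f u') < real (f u) \<and> real (f u) < real (f v') \<and> real (f v') < real (f v))"
    using noncrossing_chordsD[OF chords uv(2,1)] by (auto simp: cyclic_order4_def)
qed

lemma outerplanar_if_drawn_above_axis:
  assumes "simple_graph V E" "inj_on pos V" and axis: "\<And>v. v \<in> V \<Longrightarrow> Im (pos v) = 0"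
    and "\<And>e. e \<in> E \<Longrightarrow>
      arc (\<gamma> e) \<and> (\<exists>u v. e = {u, v} \<and> pathstart (\<gamma> e) = pos u \<and> pathfinish (\<gamma> e) = pos v)"
    and "\<And>e t. e \<in> E \<Longrightarrow> t \<in> {0<..<1} \<Longrightarrow> \<gamma> e t \<notin> pos ` V"
    and "\<And>e e'. e \<in> E \<Longrightarrow> e' \<in> E \<Longrightarrow> e \<noteq> e' \<Longrightarrow> path_image (\<gamma> e) \<inter> path_image (\<gamma> e') \<subseteq> pos ` V"
    and above: "\<And>e z. e \<in> E \<Longrightarrow> z \<in> path_image (\<gamma> e) \<Longrightarrow> 0 \<le> Im z"
  shows "outerplanar V E"
proof -
  define S where "S = pos ` V \<union> (\<Union>e\<in>E. path_image (\<gamma> e))"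
  have "0 \<le> Im z" if "z \<in> S" for z
    using that unfolding S_def by (auto simp: axis intro: above)
  then have "pos v \<in> frontier (outside S)" if "v \<in> V" for v
    by (rule axis_point_in_frontier_outside) (use that axis in \<open>auto simp: S_def\<close>)
  then show ?thesis
    unfolding outerplanar_def S_def using assms(1-6) by blast
qed

lemma noncrossing_chords_outerplanar:
  assumes chords: "noncrossing_chords V E f"
  shows "outerplanar V E"
proof -
  define pos where "pos v = Complex (f v) 0" for v
  define \<gamma> where "\<gamma> e = arch (Min (f ` e)) (Max (f ` e))" for e
  have edge: "\<exists>u v. e = {u, v} \<and> f u < f v \<and> \<gamma> e = arch (f u) (f v)" if e: "e \<in> E" for e
  proof -
    obtain u v where "e = {u, v}" "f u < f v" using noncrossing_chords_edge_ordered[OF chords e] .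
    then show ?thesis by (auto simp: \<gamma>_def)
  qed
  show ?thesis
  proof (rule outerplanar_if_drawn_above_axis)
    show "simple_graph V E" "inj_on pos V"
      using chords by (auto simp: noncrossing_chords_def inj_on_def pos_def)
    show "Im (pos v) = 0" for v by (simp add: pos_def)
    show "arc (\<gamma> e) \<and> (\<exists>u v. e = {u, v} \<and> pathstart (\<gamma> e) = pos u \<and> pathfinish (\<gamma> e) = pos v)"
      if e: "e \<in> E" for e
    proof -
      obtain u v where "e = {u, v}" "f u < f v" "\<gamma> e = arch (f u) (f v)" using edge[OF e] by blast
      then show ?thesis using arc_arch[of "f u" "f v"] by (auto simp: pos_def)
    qed
    show "\<gamma> e t \<notin> pos ` V" if e: "e \<in> E" and t: "t \<in> {0<..<1}" for e t
    proof -
      obtain u v where "f u < f v" "\<gamma> e = arch (f u) (f v)" using edge[OF e] by blast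
      then have "0 < Im (\<gamma> e t)" using Im_arch_pos t by simp
      then show ?thesis by (auto simp: pos_def)
    qed
    show "0 \<le> Im z" if e: "e \<in> E" and z: "z \<in> path_image (\<gamma> e)" for e z
    proof -
      obtain u v where "f u < f v" "\<gamma> e = arch (f u) (f v)" using edge[OF e] by blast
      then show ?thesis using Im_arch_nonneg[of "f u" "f v" z] z by simp
    qed
    show "path_image (\<gamma> e) \<inter> path_image (\<gamma> e') \<subseteq> pos ` V"
      if e: "e \<in> E" and e': "e' \<in> E" and "e \<noteq> e'" for e e'
    proof
      fix z assume z: "z \<in> path_image (\<gamma> e) \<inter> path_image (\<gamma> e')"
      obtain u v where uv: "e = {u, v}" "f u < f v" "\<gamma> e = arch (f u) (f v)" using edge e by blast
      obtain u' v' where uv': "e' = {u', v'}" "f u' < f v'" "\<gamma> e' = arch (f u') (f v')" using edge e' by blast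
      have "Im z = 0"
        using noncrossing_arches_meet_on_axis[OF chords, of u v u' v'] e e' \<open>e \<noteq> e'\<close> uv uv' z by auto
      then show "z \<in> pos ` V"
        using arch_on_axis[of z "f u" "f v"] noncrossing_chords_edgeD[OF chords, of u v] e uv z
        by (auto simp: pos_def)
    qed
  qed
qed

section \<open>Dual supports\<close>

definition adjacent_in :: "'v set set \<Rightarrow> 'v set \<Rightarrow> 'v \<Rightarrow> 'v \<Rightarrow> bool" where
  "adjacent_in E S = (\<lambda>a b. a \<in> S \<and> b \<in> S \<and> {a, b} \<in> E)"

lemma induces_connected_iff: "induces_connected E S \<longleftrightarrow> (\<forall>x\<in>S. \<forall>y\<in>S. (adjacent_in E S)\<^sup>*\<^sup>* x y)"
  unfolding induces_connected_def adjacent_in_def ..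

lemma adjacent_in_rtranclp_sym:
  assumes "(adjacent_in E S)\<^sup>*\<^sup>* x y"
  shows "(adjacent_in E S)\<^sup>*\<^sup>* y x"
proof -
  have "symp (adjacent_in E S)" unfolding symp_def adjacent_in_def by (simp add: insert_commute)
  then show ?thesis using assms by (rule sympD[OF symp_rtranclp])
qed

lemma adjacent_in_rtranclp_mono:
  assumes "(adjacent_in E S)\<^sup>*\<^sup>* x y" "S \<subseteq> S'" "E \<subseteq> E'"
  shows "(adjacent_in E' S')\<^sup>*\<^sup>* x y"
proof -
  have "adjacent_in E S \<le> adjacent_in E' S'" using assms(2,3) unfolding adjacent_in_def by auto
  then show ?thesis by (rule predicate2D[OF rtranclp_mono assms(1)])
qed

lemma induces_connected_if_hub:
  assumes "\<And>x. x \<in> S \<Longrightarrow> (adjacent_in E S)\<^sup>*\<^sup>* x c"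
  shows "induces_connected E S"
  unfolding induces_connected_iff
proof (intro ballI)
  fix x y assume "x \<in> S" "y \<in> S"
  show "(adjacent_in E S)\<^sup>*\<^sup>* x y"
    using rtranclp_trans[OF assms[OF \<open>x \<in> S\<close>] adjacent_in_rtranclp_sym[OF assms[OF \<open>y \<in> S\<close>]]] .
qed

lemma induces_connected_mono:
  assumes "induces_connected E S" "E \<subseteq> E'"
  shows "induces_connected E' S"
  unfolding induces_connected_iff
proof (intro ballI)
  fix x y assume "x \<in> S" "y \<in> S"
  then have "(adjacent_in E S)\<^sup>*\<^sup>* x y" using assms(1) unfolding induces_connected_iff by blast
  then show "(adjacent_in E' S)\<^sup>*\<^sup>* x y" using order_refl assms(2) by (rule adjacent_in_rtranclp_mono)
qed

lemma induces_connected_Un: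
  assumes "induces_connected E A" "induces_connected E B" "h \<in> A" "h \<in> B"
  shows "induces_connected E (A \<union> B)"
proof (rule induces_connected_if_hub)
  fix x assume "x \<in> A \<union> B"
  then have "(adjacent_in E A)\<^sup>*\<^sup>* x h \<or> (adjacent_in E B)\<^sup>*\<^sup>* x h"
    using assms unfolding induces_connected_iff by blast
  then show "(adjacent_in E (A \<union> B))\<^sup>*\<^sup>* x h"
  proof
    assume "(adjacent_in E A)\<^sup>*\<^sup>* x h"
    then show ?thesis by (rule adjacent_in_rtranclp_mono) auto
  next
    assume "(adjacent_in E B)\<^sup>*\<^sup>* x h"
    then show ?thesis by (rule adjacent_in_rtranclp_mono) auto
  qed
qed

definition dual_support :: "'a set set \<Rightarrow> 'a set set set \<Rightarrow> bool" where
  "dual_support \<H> E \<longleftrightarrow> (\<forall>v. induces_connected E {H \<in> \<H>. v \<in> H})"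

definition has_noncrossing_dual_support :: "'a set set \<Rightarrow> bool" where
  "has_noncrossing_dual_support \<H> \<longleftrightarrow> (\<exists>E f. noncrossing_chords \<H> E f \<and> dual_support \<H> E)"

lemma has_noncrossing_dual_support_subsingleton:
  assumes "finite \<H>" "card \<H> \<le> 1"
  shows "has_noncrossing_dual_support \<H>"
proof -
  have all_equal: "\<forall>x\<in>\<H>. \<forall>y\<in>\<H>. x = y"
    using assms by (metis One_nat_def card_le_Suc0_iff_eq)
  obtain f where "noncrossing_chords \<H> {} f" using noncrossing_chords_empty[OF assms(1)] ..
  moreover have "induces_connected {} {H \<in> \<H>. v \<in> H}" for v
    unfolding induces_connected_iff
  proof (intro ballI)
    fix x y assume "x \<in> {H \<in> \<H>. v \<in> H}" "y \<in> {H \<in> \<H>. v \<in> H}"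
    then have "x = y" using all_equal by blast
    then show "(adjacent_in {} {H \<in> \<H>. v \<in> H})\<^sup>*\<^sup>* x y" by simp
  qed
  ultimately show ?thesis by (auto simp: has_noncrossing_dual_support_def dual_support_def)
qed

lemma has_noncrossing_dual_support_pair:
  assumes "H0 \<noteq> H1"
  shows "has_noncrossing_dual_support {H0, H1}"
proof -
  have conn: "induces_connected {{H0, H1}} S" if "S \<subseteq> {H0, H1}" for S
    unfolding induces_connected_iff
  proof (intro ballI)
    fix x y assume "x \<in> S" "y \<in> S"
    show "(adjacent_in {{H0, H1}} S)\<^sup>*\<^sup>* x y"
    proof (cases "x = y")
      case False
      then have "{x, y} = {H0, H1}" using that \<open>x \<in> S\<close> \<open>y \<in> S\<close> by blast
      then have "adjacent_in {{H0, H1}} S x y" using \<open>x \<in> S\<close> \<open>y \<in> S\<close> by (simp add: adjacent_in_def)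
      then show ?thesis by (rule r_into_rtranclp)
    qed simp
  qed
  then have "dual_support {H0, H1} {{H0, H1}}"
    unfolding dual_support_def by (intro allI conn) auto
  then show ?thesis
    using noncrossing_chords_single_edge[OF assms] by (auto simp: has_noncrossing_dual_support_def)
qed

lemma dual_support_Un:
  assumes "dual_support \<H>1 E1" "dual_support \<H>2 E2" "H \<in> \<H>1" "H \<in> \<H>2"
    and apart: "\<forall>K1\<in>\<H>1. \<forall>K2\<in>\<H>2. K1 \<inter> K2 \<subseteq> H"
  shows "dual_support (\<H>1 \<union> \<H>2) (E1 \<union> E2)"
  unfolding dual_support_def
proof
  fix v
  have split: "{K \<in> \<H>1 \<union> \<H>2. v \<in> K} = {K \<in> \<H>1. v \<in> K} \<union> {K \<in> \<H>2. v \<in> K}" by blast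
  have conn: "induces_connected (E1 \<union> E2) {K \<in> \<H>1. v \<in> K}" "induces_connected (E1 \<union> E2) {K \<in> \<H>2. v \<in> K}"
    using assms(1,2) induces_connected_mono[of E1 _ "E1 \<union> E2"] induces_connected_mono[of E2 _ "E1 \<union> E2"]
    by (auto simp: dual_support_def)
  show "induces_connected (E1 \<union> E2) {K \<in> \<H>1 \<union> \<H>2. v \<in> K}"
  proof (cases "v \<in> H")
    case True
    then show ?thesis unfolding split using conn assms(3,4) by (intro induces_connected_Un) auto
  next
    case False
    then consider "{K \<in> \<H>1. v \<in> K} = {}" | "{K \<in> \<H>2. v \<in> K} = {}" using apart by blast
    then show ?thesis unfolding split using conn by cases (simp_all only: Un_empty_left Un_empty_right)
  qed
qed

lemma has_noncrossing_dual_support_glue: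
  assumes "has_noncrossing_dual_support \<H>1" "has_noncrossing_dual_support \<H>2"
    and "\<H>1 \<inter> \<H>2 = {H}" "\<forall>K1\<in>\<H>1. \<forall>K2\<in>\<H>2. K1 \<inter> K2 \<subseteq> H"
  shows "has_noncrossing_dual_support (\<H>1 \<union> \<H>2)"
proof -
  obtain E1 f1 E2 f2 where chords: "noncrossing_chords \<H>1 E1 f1" "noncrossing_chords \<H>2 E2 f2"
    and support: "dual_support \<H>1 E1" "dual_support \<H>2 E2"
    using assms(1,2) by (auto simp: has_noncrossing_dual_support_def)
  obtain f where "noncrossing_chords (\<H>1 \<union> \<H>2) (E1 \<union> E2) f"
    using noncrossing_chords_glue[OF chords assms(3)] ..
  moreover have "dual_support (\<H>1 \<union> \<H>2) (E1 \<union> E2)"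
    using dual_support_Un[OF support _ _ assms(4)] assms(3) by blast
  ultimately show ?thesis by (auto simp: has_noncrossing_dual_support_def)
qed

lemma has_noncrossing_dual_support_insert_subset:
  assumes "has_noncrossing_dual_support \<H>" "H1 \<in> \<H>" "H0 \<notin> \<H>" "H0 \<subseteq> H1"
  shows "has_noncrossing_dual_support (insert H0 \<H>)"
proof -
  have "H0 \<noteq> H1" using assms(2,3) by blast
  have "has_noncrossing_dual_support (\<H> \<union> {H0, H1})"
    by (rule has_noncrossing_dual_support_glue[OF assms(1) has_noncrossing_dual_support_pair[OF \<open>H0 \<noteq> H1\<close>]])
      (use assms in auto)
  moreover have "\<H> \<union> {H0, H1} = insert H0 \<H>" using assms(2) by blast
  ultimately show ?thesis by simp
qed

section \<open>Separation on the cycle\<close>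

definition separates :: "nat set \<Rightarrow> nat \<Rightarrow> nat \<Rightarrow> bool" where
  "separates H p q \<longleftrightarrow> (\<exists>h\<in>H. \<exists>h'\<in>H. cyclic_order4 p h q h')"

lemma not_separates_self: "\<not> separates H p p"
  by (auto simp: separates_def cyclic_order4_def)

lemma not_separates_trans:
  assumes "q \<notin> H" "\<not> separates H p q" "\<not> separates H q r"
  shows "\<not> separates H p r"
proof
  assume "separates H p r"
  then obtain h h' where "h \<in> H" "h' \<in> H" "cyclic_order4 p h r h'" by (auto simp: separates_def)
  moreover have "q \<notin> {p, h, r, h'}"
    using assms \<open>separates H p r\<close> \<open>h \<in> H\<close> \<open>h' \<in> H\<close> by auto
  ultimately have "cyclic_order4 p h q h' \<or> cyclic_order4 q h r h'"
    by (intro cyclic_order4_split)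
  then show False using assms(2,3) \<open>h \<in> H\<close> \<open>h' \<in> H\<close> by (auto simp: separates_def)
qed

lemma axax_free_not_separates:
  assumes "axax_free \<H>" "K \<in> \<H>" "H \<in> \<H>" "x \<in> K - H" "y \<in> K - H"
  shows "\<not> separates H x y"
proof
  assume "separates H x y"
  then obtain h h' where "h \<in> H" "h' \<in> H" "cyclic_order4 x h y h'" by (auto simp: separates_def)
  then have "axax_pair \<H> K H" using assms(2-5) unfolding axax_pair_def by blast
  then show False using assms(1) by (auto simp: axax_free_def)
qed

lemma axax_free_subset:
  assumes "axax_free \<H>" "\<H>' \<subseteq> \<H>"
  shows "axax_free \<H>'"
proof (unfold axax_free_def, rule notI)
  assume "\<exists>H H'. axax_pair \<H>' H H'"
  then obtain H H' where "axax_pair \<H>' H H'" by blast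
  then have "axax_pair \<H> H H'" using assms(2) by (auto simp: axax_pair_def)
  then show False using assms(1) by (auto simp: axax_free_def)
qed

lemma axax_free_same_side:
  assumes axax: "axax_free \<H>" and "H \<in> \<H>" "K \<in> \<H>" and x: "x \<in> K - H" and y: "y \<in> K - H"
    and "separates H p x"
  shows "separates H p y"
proof (rule ccontr)
  assume "\<not> separates H p y"
  moreover have "\<not> separates H y x" using axax_free_not_separates[OF axax \<open>K \<in> \<H>\<close> \<open>H \<in> \<H>\<close> y x] .
  ultimately have "\<not> separates H p x" using not_separates_trans[of y H p x] y by blast
  then show False using \<open>separates H p x\<close> by contradiction
qed

lemma axax_free_separation_split:
  assumes axax: "axax_free \<H>" and antichain: "\<And>K L. K \<in> \<H> \<Longrightarrow> L \<in> \<H> \<Longrightarrow> K \<subseteq> L \<Longrightarrow> K = L"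
    and H: "H \<in> \<H>" and p: "p \<in> \<Union>\<H> - H" and q: "q \<in> \<Union>\<H> - H" and "separates H p q"
  obtains \<H>1 \<H>2 where "\<H>1 \<subset> \<H>" "\<H>2 \<subset> \<H>" "\<H>1 \<union> \<H>2 = \<H>" "\<H>1 \<inter> \<H>2 = {H}"
    "\<forall>K1\<in>\<H>1. \<forall>K2\<in>\<H>2. K1 \<inter> K2 \<subseteq> H"
proof -
  define \<H>1 where "\<H>1 = {K \<in> \<H>. \<forall>x\<in>K - H. \<not> separates H p x}"
  define \<H>2 where "\<H>2 = {K \<in> \<H>. \<forall>x\<in>K - H. separates H p x}"
  have same_side: "separates H p y" if "K \<in> \<H>" "x \<in> K - H" "y \<in> K - H" "separates H p x" for K x y
    using axax_free_same_side[OF axax H that] .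
  have union: "\<H>1 \<union> \<H>2 = \<H>"
  proof
    show "\<H> \<subseteq> \<H>1 \<union> \<H>2"
    proof
      fix K assume K: "K \<in> \<H>"
      show "K \<in> \<H>1 \<union> \<H>2"
      proof (cases "\<exists>x\<in>K - H. separates H p x")
        case True
        then have "K \<in> \<H>2" unfolding \<H>2_def using same_side[OF K] K by blast
        then show ?thesis ..
      next
        case False
        then have "K \<in> \<H>1" unfolding \<H>1_def using K by blast
        then show ?thesis ..
      qed
    qed
  qed (auto simp: \<H>1_def \<H>2_def)
  have inter: "\<H>1 \<inter> \<H>2 = {H}"
  proof
    show "\<H>1 \<inter> \<H>2 \<subseteq> {H}"
    proof
      fix K assume "K \<in> \<H>1 \<inter> \<H>2"
      then have "K \<in> \<H>" "K \<subseteq> H" unfolding \<H>1_def \<H>2_def by blast+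
      then show "K \<in> {H}" using antichain H by blast
    qed
  qed (use H in \<open>auto simp: \<H>1_def \<H>2_def\<close>)
  obtain K1 K2 where K1: "K1 \<in> \<H>" "p \<in> K1 - H" and K2: "K2 \<in> \<H>" "q \<in> K2 - H" using p q by blast
  have "K1 \<notin> \<H>2" "K2 \<notin> \<H>1"
    using K1 K2 not_separates_self \<open>separates H p q\<close> by (auto simp: \<H>1_def \<H>2_def)
  then have "\<H>1 \<subset> \<H>" "\<H>2 \<subset> \<H>" using union K1 K2 by blast+
  moreover have "\<forall>K1\<in>\<H>1. \<forall>K2\<in>\<H>2. K1 \<inter> K2 \<subseteq> H" by (auto simp: \<H>1_def \<H>2_def)
  ultimately show thesis using union inter by (intro that)
qed

section \<open>Families of cyclic intervals\<close>

definition cyclic_successor_edges :: "nat \<Rightarrow> ('v \<Rightarrow> nat) \<Rightarrow> 'v set \<Rightarrow> 'v set set" where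
  "cyclic_successor_edges n f V = {{u, v} | u v. u \<in> V \<and> v \<in> V \<and> u \<noteq> v \<and>
     (\<forall>w\<in>V. \<not> (0 < forward_dist n (f u) (f w) \<and> forward_dist n (f u) (f w) < forward_dist n (f u) (f v)))}"

lemma noncrossing_cyclic_successor_edges:
  assumes "finite V" "inj_on f V" and less_n: "\<And>v. v \<in> V \<Longrightarrow> f v < n"
  shows "noncrossing_chords V (cyclic_successor_edges n f V) f"
proof -
  let ?E = "cyclic_successor_edges n f V"
  let ?between = "\<lambda>u w v. 0 < forward_dist n (f u) (f w) \<and> forward_dist n (f u) (f w) < forward_dist n (f u) (f v)"
  have edge: "a \<in> V \<and> b \<in> V \<and> ((\<forall>w\<in>V. \<not> ?between a w b) \<or> (\<forall>w\<in>V. \<not> ?between b w a))"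
    if "{a, b} \<in> ?E" for a b
    using that unfolding cyclic_successor_edges_def by (auto simp: doubleton_eq_iff)
  have "\<not> cyclic_order4 (f a) (f c) (f b) (f d)" if ab: "{a, b} \<in> ?E" and cd: "{c, d} \<in> ?E" for a b c d
  proof
    assume cross: "cyclic_order4 (f a) (f c) (f b) (f d)"
    have "a \<in> V" "b \<in> V" "c \<in> V" "d \<in> V" using edge[OF ab] edge[OF cd] by auto
    then have bounds: "f a < n" "f b < n" "f c < n" "f d < n" using less_n by auto
    have "?between a c b"
      using cross by (simp add: cyclic_order4_iff_forward_dist[OF bounds(1,3,2,4)])
    moreover have "?between b d a"
      using cyclic_order4_rotate[OF cyclic_order4_rotate[OF cross]]
      by (simp add: cyclic_order4_iff_forward_dist[OF bounds(2,4,1,3)])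
    ultimately show False using edge[OF ab] \<open>c \<in> V\<close> \<open>d \<in> V\<close> by blast
  qed
  moreover have "simple_graph V ?E"
    using assms(1) unfolding simple_graph_def cyclic_successor_edges_def by blast
  ultimately show ?thesis using assms(2) by (simp add: noncrossing_chords_def)
qed

lemma cyclic_predecessor:
  assumes inj: "inj_on f V" and less_n: "\<And>v. v \<in> V \<Longrightarrow> f v < n"
    and u: "u \<in> V" and b: "b \<in> V" "b \<noteq> u"
  obtains w where "w \<in> V" "{w, u} \<in> cyclic_successor_edges n f V"
    "forward_dist n (f b) (f w) < forward_dist n (f b) (f u)"
proof -
  define w where "w = arg_min (\<lambda>w. forward_dist n (f w) (f u)) (\<lambda>w. w \<in> V \<and> w \<noteq> u)"
  have w: "w \<in> V" "w \<noteq> u"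
    and closest: "\<And>x. x \<in> V \<Longrightarrow> x \<noteq> u \<Longrightarrow> forward_dist n (f w) (f u) \<le> forward_dist n (f x) (f u)"
    using arg_min_nat_lemma[of "\<lambda>w. w \<in> V \<and> w \<noteq> u" b "\<lambda>w. forward_dist n (f w) (f u)"] b
    unfolding w_def by auto
  have bounds: "f w < n" "f u < n" "f b < n" using less_n w u b by auto
  have "f w \<noteq> f u" using inj w u by (auto dest: inj_onD)
  then have w_before_u: "0 < forward_dist n (f w) (f u)"
    using forward_dist_eq_0_iff[OF bounds(1,2)] by simp
  have not_between: "\<not> (0 < forward_dist n (f w) (f x) \<and> forward_dist n (f w) (f x) < forward_dist n (f w) (f u))"
    if "x \<in> V" for x
  proof
    assume between: "0 < forward_dist n (f w) (f x) \<and> forward_dist n (f w) (f x) < forward_dist n (f w) (f u)"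
    have "f x < n" using less_n that by blast
    then have "forward_dist n (f w) (f x) + forward_dist n (f x) (f u) = forward_dist n (f w) (f u)"
      using between forward_dist_add_eq_iff_left[OF bounds(1) _ bounds(2)] by simp
    moreover have "x \<noteq> u" using between by auto
    ultimately show False using closest[OF that] between by auto
  qed
  have "{w, u} \<in> cyclic_successor_edges n f V"
    using w u not_between unfolding cyclic_successor_edges_def by blast
  moreover have "forward_dist n (f w) (f u) \<le> forward_dist n (f b) (f u)"
    using closest b by blast
  then have "forward_dist n (f b) (f w) + forward_dist n (f w) (f u) = forward_dist n (f b) (f u)"
    using forward_dist_add_eq_iff_right[OF bounds(3,1,2)] by simp
  then have "forward_dist n (f b) (f w) < forward_dist n (f b) (f u)"
    using w_before_u by linarith
  ultimately show thesis by (rule that[OF w(1)])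
qed

locale cyclic_interval_family =
  fixes n :: nat and \<H> :: "nat set set"
  assumes family_subset: "\<H> \<subseteq> Pow {0..<n}"
    and antichain: "\<And>H K. H \<in> \<H> \<Longrightarrow> K \<in> \<H> \<Longrightarrow> H \<subseteq> K \<Longrightarrow> H = K"
    and no_separation: "\<And>H p q. H \<in> \<H> \<Longrightarrow> p \<in> \<Union>\<H> - H \<Longrightarrow> q \<in> \<Union>\<H> - H \<Longrightarrow> \<not> separates H p q"
    and two_members: "2 \<le> card \<H>"
begin

lemma finite_family: "finite \<H>"
  using family_subset by (meson finite_Pow_iff finite_atLeastLessThan finite_subset)

lemma member_less:
  assumes "H \<in> \<H>" "x \<in> H"
  shows "x < n"
proof -
  have "H \<subseteq> {0..<n}" using assms(1) family_subset by blast
  then show ?thesis using assms(2) by auto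
qed

lemma exists_outside_point: "H \<in> \<H> \<Longrightarrow> \<exists>p. p \<in> \<Union>\<H> - H"
proof -
  assume "H \<in> \<H>"
  have "\<not> \<H> \<subseteq> {H}" using two_members card_mono[of "{H}" \<H>] by auto
  then obtain K where "K \<in> \<H>" "K \<noteq> H" by blast
  then have "\<not> K \<subseteq> H" using antichain \<open>H \<in> \<H>\<close> by blast
  then show ?thesis using \<open>K \<in> \<H>\<close> by blast
qed

lemma member_nonempty:
  assumes "H \<in> \<H>"
  shows "H \<noteq> {}"
proof
  assume "H = {}"
  obtain p where "p \<in> \<Union>\<H> - H" using exists_outside_point[OF assms] ..
  then obtain K where "K \<in> \<H>" "p \<in> K" "p \<notin> H" by blast
  moreover have "H \<subseteq> K" using \<open>H = {}\<close> by simp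
  ultimately show False using antichain[OF assms] by blast
qed

text \<open>Since H is a cyclic interval of the points of \<open>\<Union>\<H>\<close>, the first point of H met going
  forward from any point of \<open>\<Union>\<H> - H\<close> is the same, and H is the arc of \<open>\<Union>\<H>\<close> beginning
  there.\<close>

definition start :: "nat set \<Rightarrow> nat" where
  "start H = arg_min (forward_dist n (SOME p. p \<in> \<Union>\<H> - H)) (\<lambda>h. h \<in> H)"

lemma start_is_first:
  assumes "H \<in> \<H>"
  shows "\<exists>p\<in>\<Union>\<H> - H. start H \<in> H \<and> (\<forall>h\<in>H. forward_dist n p (start H) \<le> forward_dist n p h)"
proof -
  define p where "p = (SOME p. p \<in> \<Union>\<H> - H)"
  have "p \<in> \<Union>\<H> - H"
    unfolding p_def by (rule someI_ex[OF exists_outside_point[OF assms]])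
  moreover obtain h where "h \<in> H" using member_nonempty[OF assms] by blast
  then have "start H \<in> H \<and> (\<forall>h'. h' \<in> H \<longrightarrow> forward_dist n p (start H) \<le> forward_dist n p h')"
    unfolding start_def p_def[symmetric] by (rule arg_min_nat_lemma)
  ultimately show ?thesis by blast
qed

lemma start_in: "H \<in> \<H> \<Longrightarrow> start H \<in> H"
  using start_is_first by blast

lemma start_less: "H \<in> \<H> \<Longrightarrow> start H < n"
  using member_less start_in by blast

lemma member_if_forward_dist_start_le:
  assumes H: "H \<in> \<H>" and x: "x \<in> \<Union>\<H>" and y: "y \<in> H"
    and le: "forward_dist n (start H) x \<le> forward_dist n (start H) y"
  shows "x \<in> H"
proof (rule ccontr)
  assume "x \<notin> H"
  obtain p where p: "p \<in> \<Union>\<H> - H" and s: "start H \<in> H"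
    and first: "\<And>h. h \<in> H \<Longrightarrow> forward_dist n p (start H) \<le> forward_dist n p h"
    using start_is_first[OF H] by blast
  have bounds: "start H < n" "p < n" "x < n" "y < n"
    using member_less H s p x y by auto
  have "x \<noteq> start H" "x \<noteq> y" "p \<noteq> start H" "p \<noteq> y"
    using \<open>x \<notin> H\<close> s y p by auto
  have "0 < forward_dist n (start H) x"
    using forward_dist_eq_0_iff[OF bounds(1,3)] \<open>x \<noteq> start H\<close> by simp
  moreover have "forward_dist n (start H) x \<noteq> forward_dist n (start H) y"
    using forward_dist_inject[OF bounds(1,3,4)] \<open>x \<noteq> y\<close> by simp
  then have "forward_dist n (start H) x < forward_dist n (start H) y"
    using le by simp
  moreover have "forward_dist n (start H) y < forward_dist n (start H) p"
    using first[OF y] bounds \<open>p \<noteq> start H\<close> \<open>p \<noteq> y\<close>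
    by (auto simp: forward_dist_def split: if_splits)
  ultimately have "cyclic_order4 (start H) x y p"
    by (simp add: cyclic_order4_iff_forward_dist[OF bounds(1,3,4,2)])
  then have "cyclic_order4 x y p (start H)" by (rule cyclic_order4_rotate)
  then have "separates H x p" using y s unfolding separates_def by blast
  then show False using no_separation[OF H _ p] x \<open>x \<notin> H\<close> by blast
qed

lemma inj_on_start: "inj_on start \<H>"
proof (rule inj_onI)
  fix H K assume H: "H \<in> \<H>" and K: "K \<in> \<H>" and same_start: "start H = start K"
  show "H = K"
  proof (rule ccontr)
    assume "H \<noteq> K"
    then obtain y z where y: "y \<in> H" "y \<notin> K" and z: "z \<in> K" "z \<notin> H"
      using antichain H K by blast
    have "y \<in> \<Union>\<H>" "z \<in> \<Union>\<H>" using y z H K by auto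
    consider "forward_dist n (start H) y \<le> forward_dist n (start H) z"
      | "forward_dist n (start H) z \<le> forward_dist n (start H) y" by linarith
    then show False
    proof cases
      case 1
      then have "y \<in> K"
        using member_if_forward_dist_start_le[OF K \<open>y \<in> \<Union>\<H>\<close> z(1)] same_start by simp
      then show False using y by blast
    next
      case 2
      then have "z \<in> H" using member_if_forward_dist_start_le[OF H \<open>z \<in> \<Union>\<H>\<close> y(1)] by simp
      then show False using z by blast
    qed
  qed
qed

text \<open>If B is the member containing u whose start lies farthest back from u, then a cyclic
  predecessor P of a member containing u, not lying further back than B, contains u as well:
  otherwise P would be contained in B.\<close>

lemma predecessor_contains_point:
  assumes B: "B \<in> \<H>" "u \<in> B"
    and farthest: "\<And>X. X \<in> \<H> \<Longrightarrow> u \<in> X \<Longrightarrow> forward_dist n (start X) u \<le> forward_dist n (start B) u"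
    and H: "H \<in> \<H>" "u \<in> H"
    and P: "P \<in> \<H>" "forward_dist n (start B) (start P) < forward_dist n (start B) (start H)"
  shows "u \<in> P"
proof (rule ccontr)
  assume "u \<notin> P"
  have bounds: "start B < n" "start H < n" "start P < n" "u < n"
    using start_less member_less B H P by auto
  have "u \<in> \<Union>\<H>" using B by blast
  have "forward_dist n (start B) (start H) + forward_dist n (start H) u = forward_dist n (start B) u"
    using farthest[OF H] forward_dist_add_eq_iff_right[OF bounds(1,2,4)] by simp
  then have "forward_dist n (start B) (start P) < forward_dist n (start B) u"
    using P(2) by linarith
  then have via_P: "forward_dist n (start B) (start P) + forward_dist n (start P) u = forward_dist n (start B) u"
    using forward_dist_add_eq_iff_left[OF bounds(1,3,4)] by simp
  have "P \<subseteq> B"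
  proof
    fix y assume y: "y \<in> P"
    then have "y < n" "y \<in> \<Union>\<H>" using member_less P(1) by auto
    have "forward_dist n (start P) y < forward_dist n (start P) u"
      using member_if_forward_dist_start_le[OF P(1) \<open>u \<in> \<Union>\<H>\<close> y] \<open>u \<notin> P\<close> by (meson not_le)
    moreover have "forward_dist n (start B) u < n" using forward_dist_less[OF bounds(1,4)] .
    ultimately have "forward_dist n (start B) (start P) + forward_dist n (start P) y < n"
      using via_P by linarith
    then have "forward_dist n (start B) (start P) + forward_dist n (start P) y = forward_dist n (start B) y"
      by (rule forward_dist_add_eq_if_less[OF bounds(1,3) \<open>y < n\<close>])
    then have "forward_dist n (start B) y \<le> forward_dist n (start B) u"
      using via_P \<open>forward_dist n (start P) y < forward_dist n (start P) u\<close> by linarith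
    then show "y \<in> B" using member_if_forward_dist_start_le[OF B(1) \<open>y \<in> \<Union>\<H>\<close> B(2)] by blast
  qed
  then have "P = B" using antichain P(1) B(1) by blast
  then show False using \<open>u \<notin> P\<close> B(2) by simp
qed

lemma joined_to_farthest:
  assumes B: "B \<in> \<H>" "u \<in> B"
    and farthest: "\<And>X. X \<in> \<H> \<Longrightarrow> u \<in> X \<Longrightarrow> forward_dist n (start X) u \<le> forward_dist n (start B) u"
  shows "H \<in> \<H> \<Longrightarrow> u \<in> H \<Longrightarrow>
    (adjacent_in (cyclic_successor_edges n start \<H>) {X \<in> \<H>. u \<in> X})\<^sup>*\<^sup>* H B"
proof (induction H rule: measure_induct_rule[where f = "\<lambda>H. forward_dist n (start B) (start H)"])
  case (less H)
  show ?case
  proof (cases "H = B")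
    case False
    obtain P where P: "P \<in> \<H>" "{P, H} \<in> cyclic_successor_edges n start \<H>"
      "forward_dist n (start B) (start P) < forward_dist n (start B) (start H)"
      using cyclic_predecessor[OF inj_on_start start_less less.prems(1) B(1)] False by blast
    have "u \<in> P" using predecessor_contains_point[OF B farthest less.prems P(1) P(3)] .
    then have "adjacent_in (cyclic_successor_edges n start \<H>) {X \<in> \<H>. u \<in> X} H P"
      using P less.prems by (auto simp: adjacent_in_def insert_commute)
    moreover have "(adjacent_in (cyclic_successor_edges n start \<H>) {X \<in> \<H>. u \<in> X})\<^sup>*\<^sup>* P B"
      using less.IH[OF P(3) P(1) \<open>u \<in> P\<close>] .
    ultimately show ?thesis by (rule converse_rtranclp_into_rtranclp)
  qed simp
qed

theorem has_noncrossing_dual_support: "has_noncrossing_dual_support \<H>"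
proof -
  have "induces_connected (cyclic_successor_edges n start \<H>) {X \<in> \<H>. u \<in> X}" for u
  proof (cases "\<exists>X\<in>\<H>. u \<in> X")
    case True
    have "forward_dist n (start X) u < n" if "X \<in> \<H>" "u \<in> X" for X
      using forward_dist_less[OF start_less[OF that(1)] member_less[OF that]] .
    then have "\<exists>B. (B \<in> \<H> \<and> u \<in> B) \<and>
        (\<forall>X. X \<in> \<H> \<and> u \<in> X \<longrightarrow> forward_dist n (start X) u \<le> forward_dist n (start B) u)"
      using True ex_has_greatest_nat[of "\<lambda>X. X \<in> \<H> \<and> u \<in> X" _ "\<lambda>X. forward_dist n (start X) u" n]
      by blast
    then obtain B where B: "B \<in> \<H>" "u \<in> B"
      and farthest: "\<And>X. X \<in> \<H> \<Longrightarrow> u \<in> X \<Longrightarrow> forward_dist n (start X) u \<le> forward_dist n (start B) u"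
      by blast
    show ?thesis
    proof (rule induces_connected_if_hub)
      fix X assume "X \<in> {X \<in> \<H>. u \<in> X}"
      then show "(adjacent_in (cyclic_successor_edges n start \<H>) {X \<in> \<H>. u \<in> X})\<^sup>*\<^sup>* X B"
        using joined_to_farthest[OF B farthest] by blast
    qed
  next
    case False
    then show ?thesis by (intro induces_connected_if_hub) blast
  qed
  then show ?thesis
    using noncrossing_cyclic_successor_edges[OF finite_family inj_on_start start_less]
    by (auto simp: has_noncrossing_dual_support_def dual_support_def)
qed

end

lemma axax_free_has_noncrossing_dual_support:
  fixes n :: nat and \<H> :: "nat set set"
  assumes "\<H> \<subseteq> Pow {0..<n}" "axax_free \<H>"
  shows "has_noncrossing_dual_support \<H>"
  using assms
proof (induction "card \<H>" arbitrary: \<H> rule: less_induct)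
  case less
  have fin: "finite \<H>"
    using less.prems(1) by (meson finite_Pow_iff finite_atLeastLessThan finite_subset)
  have IH: "has_noncrossing_dual_support \<H>'" if "\<H>' \<subset> \<H>" for \<H>'
  proof (rule less.hyps)
    show "card \<H>' < card \<H>" using psubset_card_mono[OF fin that] .
    show "\<H>' \<subseteq> Pow {0..<n}" using that less.prems(1) by blast
    show "axax_free \<H>'" using axax_free_subset[OF less.prems(2)] that by blast
  qed
  show ?case
  proof (cases "\<exists>H0\<in>\<H>. \<exists>H1\<in>\<H>. H0 \<subset> H1")
    case True
    then obtain H0 H1 where H01: "H0 \<in> \<H>" "H1 \<in> \<H>" "H0 \<subset> H1" by blast
    have "\<H> - {H0} \<subset> \<H>" "H1 \<in> \<H> - {H0}" "H0 \<notin> \<H> - {H0}" "H0 \<subseteq> H1" using H01 by auto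
    then have "has_noncrossing_dual_support (insert H0 (\<H> - {H0}))"
      using IH has_noncrossing_dual_support_insert_subset by blast
    then show ?thesis using H01(1) by (simp add: insert_absorb)
  next
    case False
    then have antichain: "\<And>K L. K \<in> \<H> \<Longrightarrow> L \<in> \<H> \<Longrightarrow> K \<subseteq> L \<Longrightarrow> K = L" by blast
    show ?thesis
    proof (cases "\<exists>H\<in>\<H>. \<exists>p\<in>\<Union>\<H> - H. \<exists>q\<in>\<Union>\<H> - H. separates H p q")
      case True
      then obtain H p q where separation: "H \<in> \<H>" "p \<in> \<Union>\<H> - H" "q \<in> \<Union>\<H> - H" "separates H p q"
        by blast
      obtain \<H>1 \<H>2 where parts: "\<H>1 \<subset> \<H>" "\<H>2 \<subset> \<H>" "\<H>1 \<union> \<H>2 = \<H>" "\<H>1 \<inter> \<H>2 = {H}"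
        "\<forall>K1\<in>\<H>1. \<forall>K2\<in>\<H>2. K1 \<inter> K2 \<subseteq> H"
        using axax_free_separation_split[OF less.prems(2) antichain separation] .
      have "has_noncrossing_dual_support (\<H>1 \<union> \<H>2)"
        by (rule has_noncrossing_dual_support_glue[OF IH[OF parts(1)] IH[OF parts(2)] parts(4,5)])
      then show ?thesis using parts(3) by simp
    next
      case False
      then have no_separation:
        "\<And>H p q. H \<in> \<H> \<Longrightarrow> p \<in> \<Union>\<H> - H \<Longrightarrow> q \<in> \<Union>\<H> - H \<Longrightarrow> \<not> separates H p q"
        by blast
      show ?thesis
      proof (cases "card \<H> \<le> 1")
        case True
        with fin show ?thesis by (rule has_noncrossing_dual_support_subsingleton)
      next
        case False
        interpret cyclic_interval_family n \<H>
          using less.prems(1) antichain no_separation False by unfold_locales auto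
        show ?thesis by (rule has_noncrossing_dual_support)
      qed
    qed
  qed
qed

theorem mainTheorem17:
  fixes n :: nat and \<H> :: "nat set set"
  assumes "n \<ge> 3" and "\<H> \<subseteq> Pow {0..<n}" and "axax_free \<H>"
  shows "\<exists>E. outerplanar \<H> E \<and> (\<forall>v<n. induces_connected E {H \<in> \<H>. v \<in> H})"
proof -
  obtain E f where "noncrossing_chords \<H> E f" "dual_support \<H> E"
    using axax_free_has_noncrossing_dual_support[OF assms(2,3)]
    unfolding has_noncrossing_dual_support_def by blast
  then show ?thesis using noncrossing_chords_outerplanar unfolding dual_support_def by blast
qed

end
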